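(* Let $\mathcal O$ be the suboperad of $\mathrm{CNCB}$ generated by $p:=T_{bbu}$ and $s:=T_{ubb}$. Then $\mathcal O$ admits the presentation with generators $p,s$ of arity $2$ and the single relation $$s\circ_1 p=p\circ_2 s.$$ That is, $\mathcal O$ is isomorphic, via the morphism sending the generators to $p$ and $s$, to the quotient of the free operad on two binary generators by the operadic congruence generated by this relation.
   Context: For $n\ge2$, a bicoloured noncrossing configuration (BNC) of size $n$ is a regular polygon with vertices $1,\dots,n+1$ clockwise, together with disjoint sets of blue and red arcs among the arcs $(i,j)$, $1\le i<j\le n+1$. The arcs $(i,i+1)$ are the edges ($i$th edge), $(1,n+1)$ is the base, and the others are diagonals. Coloured arcs are pairwise noncrossing ($(i,j),(k,l)$ cross iff $i<k<j<l$ or $k<i<l<j$), and red arcs are diagonals. There is one BNC of size $1$, a blue segment, which is the unit. The operad $\mathrm{CNCB}$ has the BNCs as elements (arity = size). Its composition $\mathfrak C\circ_i\mathfrak D$ ($\mathfrak C$ of size $n$, $\mathfrak D$ of size $m$) glues the base of $\mathfrak D$ on the $i$th edge of $\mathfrak C$. Arcs $(a,b)$ of $\mathfrak C$ become $(\sigma(a),\sigma(b))$ with $\sigma(v)=v$ for $v\le i$ and $v+m-1$ otherwise, and arcs $(a,b)$ of $\mathfrak D$ become $(a+i-1,b+i-1)$, keeping colours. The exception is the arc $(i,i+m)$, which is red if the $i$th edge of $\mathfrak C$ and the base of $\mathfrak D$ are both uncoloured, blue if both are blue, and uncoloured otherwise. For $x,y,z\in\{b,u\}$, $T_{xyz}$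 denotes the BNC of size $2$ (a triangle with vertices $1,2,3$) whose first edge $(1,2)$ has colour $x$, whose base $(1,3)$ has colour $y$, and whose second edge $(2,3)$ has colour $z$, where $b$ = blue and $u$ = uncoloured. The suboperad generated by a set is the smallest suboperad containing it. *)

theory Defs
  imports Main
begin

text \<open>A BNC is given by its size n and its sets of blue and red arcs; arcs are pairs
(i,j) of vertices with 1 <= i < j <= n+1.\<close>

datatype bnc = BNC (bsize: nat) (blue: "(nat \<times> nat) set") (red: "(nat \<times> nat) set")

definition is_arc :: "nat \<Rightarrow> nat \<times> nat \<Rightarrow> bool" where
  "is_arc n a \<longleftrightarrow> 1 \<le> fst a \<and> fst a < snd a \<and> snd a \<le> n + 1"

definition is_diagonal :: "nat \<Rightarrow> nat \<times> nat \<Rightarrow> bool" where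
  "is_diagonal n a \<longleftrightarrow> is_arc n a \<and> snd a \<noteq> fst a + 1 \<and> a \<noteq> (1, n + 1)"

definition crossing :: "nat \<times> nat \<Rightarrow> nat \<times> nat \<Rightarrow> bool" where
  "crossing a b \<longleftrightarrow> (case a of (i, j) \<Rightarrow> case b of (k, l) \<Rightarrow>
      (i < k \<and> k < j \<and> j < l) \<or> (k < i \<and> i < l \<and> l < j))"

definition unit_bnc :: bnc where
  "unit_bnc = BNC 1 {(1, 2)} {}"

definition wf_bnc :: "bnc \<Rightarrow> bool" where
  "wf_bnc C \<longleftrightarrow> C = unit_bnc \<or>
     (bsize C \<ge> 2 \<and> (\<forall>a \<in> blue C. is_arc (bsize C) a) \<and>
      (\<forall>a \<in> red C. is_diagonal (bsize C) a) \<and> blue C \<inter> red C = {} \<and>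
      (\<forall>a \<in> blue C \<union> red C. \<forall>b \<in> blue C \<union> red C. \<not> crossing a b))"

definition relabel :: "nat \<Rightarrow> nat \<Rightarrow> nat \<Rightarrow> nat" where
  "relabel i m v = (if v \<le> i then v else v + m - 1)"

definition shift :: "nat \<Rightarrow> nat \<times> nat \<Rightarrow> nat \<times> nat" where
  "shift i a = (fst a + i - 1, snd a + i - 1)"

text \<open>Partial composition C o_i D (gluing the base of D on the i-th edge of C).\<close>

definition bcomp :: "bnc \<Rightarrow> nat \<Rightarrow> bnc \<Rightarrow> bnc" where
  "bcomp C i D =
    (let n = bsize C; m = bsize D;
         sg = (\<lambda>a. (relabel i m (fst a), relabel i m (snd a)));
         e = (i, i + 1); bs = (1, m + 1);
         new = (i, i + m);
         eB = e \<in> blue C; eU = e \<notin> blue C \<and> e \<notin> red C;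
         bB = bs \<in> blue D; bU = bs \<notin> blue D \<and> bs \<notin> red D
     in BNC (n + m - 1)
        (sg ` (blue C - {e}) \<union> shift i ` (blue D - {bs}) \<union> (if eB \<and> bB then {new} else {}))
        (sg ` (red C - {e}) \<union> shift i ` (red D - {bs}) \<union> (if eU \<and> bU then {new} else {})))"

text \<open>T x y z: triangle with first edge colour x, base colour y, second edge colour z
  (True = blue, False = uncoloured).\<close>

definition T :: "bool \<Rightarrow> bool \<Rightarrow> bool \<Rightarrow> bnc" where
  "T x y z = BNC 2 ((if x then {(1, 2)} else {}) \<union> (if y then {(1, 3)} else {})
                     \<union> (if z then {(2, 3)} else {})) {}"

definition p_gen :: bnc where "p_gen = T True True False"
definition s_gen :: bnc where "s_gen = T False True True"

inductive_set gen_subop :: "bnc set \<Rightarrow> bnc set" for G where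
  gen_unit: "unit_bnc \<in> gen_subop G"
| gen_base: "C \<in> G \<Longrightarrow> C \<in> gen_subop G"
| gen_comp: "C \<in> gen_subop G \<Longrightarrow> D \<in> gen_subop G \<Longrightarrow> 1 \<le> i \<Longrightarrow> i \<le> bsize C
     \<Longrightarrow> bcomp C i D \<in> gen_subop G"

datatype gen = GP | GS

datatype ftree = Leaf | Node gen ftree ftree

fun arity :: "ftree \<Rightarrow> nat" where
  "arity Leaf = 1"
| "arity (Node g l r) = arity l + arity r"

fun tcomp :: "ftree \<Rightarrow> nat \<Rightarrow> ftree \<Rightarrow> ftree" where
  "tcomp Leaf i u = (if i = 1 then u else Leaf)"
| "tcomp (Node g l r) i u =
     (if i \<le> arity l then Node g (tcomp l i u) r else Node g l (tcomp r (i - arity l) u))"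

definition gtree :: "gen \<Rightarrow> ftree" where "gtree g = Node g Leaf Leaf"

inductive fcong :: "ftree \<Rightarrow> ftree \<Rightarrow> bool" where
  rel: "fcong (tcomp (gtree GS) 1 (gtree GP)) (tcomp (gtree GP) 2 (gtree GS))"
| refl: "fcong t t"
| sym: "fcong t u \<Longrightarrow> fcong u t"
| trans: "fcong t u \<Longrightarrow> fcong u v \<Longrightarrow> fcong t v"
| comp: "fcong t t' \<Longrightarrow> fcong u u' \<Longrightarrow> 1 \<le> i \<Longrightarrow> i \<le> arity t \<Longrightarrow>
           fcong (tcomp t i u) (tcomp t' i u')"

definition gen_val :: "gen \<Rightarrow> bnc" where
  "gen_val g = (case g of GP \<Rightarrow> p_gen | GS \<Rightarrow> s_gen)"

fun ev :: "ftree \<Rightarrow> bnc" where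
  "ev Leaf = unit_bnc"
| "ev (Node g l r) = bcomp (bcomp (gen_val g) 2 (ev r)) 1 (ev l)"

end

theory Submission
  imports Defs
begin

text \<open>Evaluating a binary tree over p and s in CNCB gives a configuration whose blue arcs are the
  base of the tree and the bases of those subtrees that hang from the left input of a p or from
  the right input of an s; red arcs never appear, because every base is blue. The relation
  s o_1 p = p o_2 s rotates an s past a p on its left, so every tree is congruent to one in which
  no s has a p on the left spine of its left input. Such normal trees are recovered from their
  blue arcs: the root is a p exactly when some blue diagonal starts at the first vertex, and the
  arcs then locate the split between the two inputs.\<close>

lemma arity_ge_1: "1 \<le> arity t"
  by (induction t) auto

lemma arity_tcomp: "1 \<le> i \<Longrightarrow> i \<le> arity t \<Longrightarrow> arity (tcomp t i u) = arity t + arity u - 1"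
  using arity_ge_1[of u] by (induction t arbitrary: i) auto

section \<open>Blue arcs of a tree\<close>

text \<open>The blue arcs of the evaluation of t, drawn with leftmost vertex v; b tells whether the
  base is blue.\<close>

fun tree_arcs :: "ftree \<Rightarrow> nat \<Rightarrow> bool \<Rightarrow> (nat \<times> nat) set" where
  "tree_arcs Leaf v b = (if b then {(v, v + 1)} else {})"
| "tree_arcs (Node g l r) v b = (if b then {(v, v + arity l + arity r)} else {})
     \<union> tree_arcs l v (g = GP) \<union> tree_arcs r (v + arity l) (g = GS)"

abbreviation inner_arcs :: "ftree \<Rightarrow> nat \<Rightarrow> (nat \<times> nat) set" where
  "inner_arcs t v \<equiv> tree_arcs t v False"

lemma tree_arcs_bounds:
  "a \<in> tree_arcs t v b \<Longrightarrow> v \<le> fst a \<and> fst a < snd a \<and> snd a \<le> v + arity t"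
proof (induction t arbitrary: v b)
  case (Node g l r)
  then show ?case using arity_ge_1[of l] arity_ge_1[of r]
    by (auto split: if_splits) fastforce+
qed (auto split: if_splits)

lemma base_notin_inner_arcs: "(v, v + arity t) \<notin> inner_arcs t v"
proof (cases t)
  case (Node g l r)
  then show ?thesis
    using tree_arcs_bounds[of _ l v] tree_arcs_bounds[of _ r "v + arity l"]
      arity_ge_1[of l] arity_ge_1[of r]
    by fastforce
qed simp

lemma tree_arcs_eq: "tree_arcs t v b = (if b then {(v, v + arity t)} else {}) \<union> inner_arcs t v"
  by (cases t) auto

lemma base_in_tree_arcs: "(v, v + arity t) \<in> tree_arcs t v True"
  by (cases t) auto

lemma inner_arcs_eq_Diff: "inner_arcs t v = tree_arcs t v b - {(v, v + arity t)}"
  using tree_arcs_eq[of t v b] base_notin_inner_arcs[of v t] by auto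

lemma inner_arcs_eqI:
  "arity t = arity u \<Longrightarrow> tree_arcs t v b = tree_arcs u v b \<Longrightarrow> inner_arcs t v = inner_arcs u v"
  using inner_arcs_eq_Diff[of t v b] inner_arcs_eq_Diff[of u v b] by simp

lemma tree_arcs_translate:
  "(\<lambda>(x, y). (x + d, y + d)) ` tree_arcs t v b = tree_arcs t (v + d) b"
  by (induction t arbitrary: v b) (auto simp: image_Un algebra_simps)

definition relabel_arc :: "nat \<Rightarrow> nat \<Rightarrow> nat \<times> nat \<Rightarrow> nat \<times> nat" where
  "relabel_arc i m a = (relabel i m (fst a), relabel i m (snd a))"

lemma relabel_arc_straddle: "v \<le> i \<Longrightarrow> i < w \<Longrightarrow> relabel_arc i m (v, w) = (v, w + m - 1)"
  by (simp add: relabel_arc_def relabel_def)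

lemma relabel_arc_tree_arcs_below:
  "v + arity t \<le> i \<Longrightarrow> relabel_arc i m ` tree_arcs t v b = tree_arcs t v b"
proof -
  assume below: "v + arity t \<le> i"
  have "relabel_arc i m a = a" if "a \<in> tree_arcs t v b" for a
    using tree_arcs_bounds[OF that] below by (cases a) (simp add: relabel_arc_def relabel_def)
  then show ?thesis by simp
qed

lemma relabel_arc_tree_arcs_above:
  assumes "1 \<le> m" "i < v"
  shows "relabel_arc i m ` tree_arcs t v b = tree_arcs t (v + (m - 1)) b"
proof -
  have "relabel_arc i m a = (\<lambda>(x, y). (x + (m - 1), y + (m - 1))) a" if "a \<in> tree_arcs t v b" for a
    using tree_arcs_bounds[OF that] assms by (cases a) (simp add: relabel_arc_def relabel_def)
  then have "relabel_arc i m ` tree_arcs t v b = (\<lambda>(x, y). (x + (m - 1), y + (m - 1))) ` tree_arcs t v b"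
    by (rule image_cong[OF HOL.refl])
  then show ?thesis by (simp add: tree_arcs_translate)
qed

lemma tree_arcs_tcomp:
  "1 \<le> i \<Longrightarrow> i \<le> arity t \<Longrightarrow> tree_arcs (tcomp t i u) v b =
    relabel_arc (v + i - 1) (arity u) ` (tree_arcs t v b - {(v + i - 1, v + i)})
    \<union> tree_arcs u (v + i - 1) ((v + i - 1, v + i) \<in> tree_arcs t v b)"
proof (induction t arbitrary: i v b)
  case (Node g l r)
  define m where "m = arity u"
  define k where "k = v + i - 1"
  define R where "R = (if b then {(v, v + arity l + arity r)} else {})"
  have m1: "1 \<le> m" using arity_ge_1 m_def by auto
  have k: "v + i - 1 = k" "v + i = k + 1" using Node.prems unfolding k_def by auto
  have e_notin_R: "(k, k + 1) \<notin> R"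
    using Node.prems arity_ge_1[of l] arity_ge_1[of r] unfolding R_def k_def by auto
  have relabel_R: "relabel_arc k m ` R = (if b then {(v, v + arity l + arity r + (m - 1))} else {})"
    using Node.prems relabel_arc_straddle[of v k "v + arity l + arity r" m] m1
    unfolding R_def k_def by auto
  have "tree_arcs (tcomp (Node g l r) i u) v b =
        relabel_arc k m ` (tree_arcs (Node g l r) v b - {(k, k + 1)})
        \<union> tree_arcs u k ((k, k + 1) \<in> tree_arcs (Node g l r) v b)"
  proof (cases "i \<le> arity l")
    case True
    have e_notin_r: "(k, k + 1) \<notin> tree_arcs r (v + arity l) (g = GS)"
      using tree_arcs_bounds[of "(k, k + 1)" r "v + arity l" "g = GS"] True Node.prems arity_ge_1[of l]
      unfolding k_def by auto
    have "tree_arcs (tcomp (Node g l r) i u) v b = relabel_arc k m ` R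
        \<union> tree_arcs (tcomp l i u) v (g = GP) \<union> tree_arcs r (v + arity l + (m - 1)) (g = GS)"
      using True relabel_R arity_tcomp[of i l u] Node.prems m1 unfolding m_def
      by (simp add: algebra_simps)
    also have "\<dots> = relabel_arc k m ` R
        \<union> (relabel_arc k m ` (tree_arcs l v (g = GP) - {(k, k + 1)})
           \<union> tree_arcs u k ((k, k + 1) \<in> tree_arcs l v (g = GP)))
        \<union> relabel_arc k m ` (tree_arcs r (v + arity l) (g = GS) - {(k, k + 1)})"
      using Node.IH(1)[of i v "g = GP"] relabel_arc_tree_arcs_above[OF m1, of k "v + arity l" r]
        e_notin_r True Node.prems k unfolding m_def by simp
    finally show ?thesis
      using e_notin_R e_notin_r unfolding R_def by (auto simp: image_Un)
  next
    case False
    define j where "j = i - arity l"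
    have j: "1 \<le> j" "j \<le> arity r" "v + arity l + j - 1 = k" "v + arity l + j = k + 1"
      using False Node.prems unfolding j_def k_def by auto
    have e_notin_l: "(k, k + 1) \<notin> tree_arcs l v (g = GP)"
      using tree_arcs_bounds[of "(k, k + 1)" l v] False unfolding k_def by auto
    have "tree_arcs (tcomp (Node g l r) i u) v b = relabel_arc k m ` R
        \<union> tree_arcs l v (g = GP) \<union> tree_arcs (tcomp r j u) (v + arity l) (g = GS)"
      using False relabel_R arity_tcomp[of j r u] j m1 unfolding j_def m_def
      by (simp add: algebra_simps)
    also have "\<dots> = relabel_arc k m ` R
        \<union> relabel_arc k m ` (tree_arcs l v (g = GP) - {(k, k + 1)})
        \<union> (relabel_arc k m ` (tree_arcs r (v + arity l) (g = GS) - {(k, k + 1)})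
           \<union> tree_arcs u k ((k, k + 1) \<in> tree_arcs r (v + arity l) (g = GS)))"
      using Node.IH(2)[OF j(1,2), of "v + arity l" "g = GS"] j(3,4) e_notin_l
        relabel_arc_tree_arcs_below[of v l k m "g = GP"] False
      unfolding m_def k_def by simp
    finally show ?thesis
      using e_notin_R e_notin_l unfolding R_def by (auto simp: image_Un)
  qed
  then show ?case by (simp only: k(1)) (simp only: k(2) m_def)
qed simp

section \<open>The evaluation morphism\<close>

definition tree_bnc :: "ftree \<Rightarrow> bnc" where
  "tree_bnc t = BNC (arity t) (tree_arcs t 1 True) {}"

lemma bcomp_tree_bnc:
  assumes "1 \<le> i" "i \<le> arity t"
  shows "bcomp (tree_bnc t) i (tree_bnc u) = tree_bnc (tcomp t i u)"
proof -
  define m where "m = arity u"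
  have base: "(1, m + 1) \<in> tree_arcs u 1 True"
    using base_in_tree_arcs[of 1 u] m_def by simp
  have shift_inner: "shift i ` (tree_arcs u 1 True - {(1, m + 1)}) = inner_arcs u i"
  proof -
    have "shift i ` inner_arcs u 1 = (\<lambda>(x, y). (x + (i - 1), y + (i - 1))) ` inner_arcs u 1"
      using assms by (intro image_cong) (auto simp: shift_def)
    then show ?thesis
      using inner_arcs_eq_Diff[of u 1 True] tree_arcs_translate[of "i - 1" u 1 False] assms m_def
      by simp
  qed
  have grafted: "tree_arcs u i c = inner_arcs u i \<union> (if c then {(i, i + m)} else {})" for c
    using m_def by (cases c) (simp_all add: tree_arcs_eq[of u i True])
  show ?thesis
    unfolding bcomp_def Let_def tree_bnc_def
    using base shift_inner grafted[of "(i, i + 1) \<in> tree_arcs t 1 True"]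
      tree_arcs_tcomp[OF assms, of u 1 True] arity_tcomp[OF assms, of u]
    by (simp add: m_def Un_assoc relabel_arc_def[abs_def])
qed

lemma gen_val_eq_tree_bnc: "gen_val g = tree_bnc (gtree g)"
  by (cases g) (auto simp: gen_val_def p_gen_def s_gen_def T_def tree_bnc_def gtree_def)

lemma Node_eq_tcomp: "Node g l r = tcomp (tcomp (gtree g) 2 r) 1 l"
  by (simp add: gtree_def)

lemma ev_eq_tree_bnc: "ev t = tree_bnc t"
proof (induction t)
  case Leaf
  then show ?case by (simp add: tree_bnc_def unit_bnc_def)
next
  case (Node g l r)
  have "bcomp (tree_bnc (gtree g)) 2 (tree_bnc r) = tree_bnc (tcomp (gtree g) 2 r)"
    by (rule bcomp_tree_bnc) (simp_all add: gtree_def)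
  moreover have "bcomp (tree_bnc (tcomp (gtree g) 2 r)) 1 (tree_bnc l) = tree_bnc (Node g l r)"
    unfolding Node_eq_tcomp
    by (rule bcomp_tree_bnc) (simp_all add: arity_tcomp arity_ge_1 gtree_def)
  ultimately show ?case
    using Node by (simp add: gen_val_eq_tree_bnc)
qed

lemma ev_gtree: "ev (gtree g) = gen_val g"
  by (simp add: ev_eq_tree_bnc gen_val_eq_tree_bnc)

lemma bsize_ev: "bsize (ev t) = arity t"
  by (simp add: ev_eq_tree_bnc tree_bnc_def)

lemma ev_tcomp: "1 \<le> i \<Longrightarrow> i \<le> arity t \<Longrightarrow> ev (tcomp t i u) = bcomp (ev t) i (ev u)"
  by (simp add: ev_eq_tree_bnc bcomp_tree_bnc)

lemma ev_in_gen_subop: "ev t \<in> gen_subop {p_gen, s_gen}"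
proof (induction t)
  case Leaf
  then show ?case by (simp add: gen_unit)
next
  case (Node g l r)
  have "ev (gtree g) \<in> gen_subop {p_gen, s_gen}"
    by (cases g) (auto simp: ev_gtree gen_val_def intro: gen_base)
  then have "ev (tcomp (gtree g) 2 r) \<in> gen_subop {p_gen, s_gen}"
    using gen_comp[OF _ Node(2), of _ 2] ev_tcomp[of 2 "gtree g" r] bsize_ev[of "gtree g"]
    by (simp add: gtree_def)
  moreover have "ev (Node g l r) = bcomp (ev (tcomp (gtree g) 2 r)) 1 (ev l)"
    unfolding Node_eq_tcomp[of g l r] by (rule ev_tcomp) (use arity_ge_1 in auto)
  ultimately show ?case
    using gen_comp[OF _ Node(1), of _ 1] bsize_ev arity_ge_1 by simp
qed

lemma gen_subop_subset_range_ev: "C \<in> gen_subop {p_gen, s_gen} \<Longrightarrow> C \<in> range ev"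
proof (induction rule: gen_subop.induct)
  case gen_unit
  then show ?case by (metis ev.simps(1) rangeI)
next
  case (gen_base C)
  have "p_gen = ev (gtree GP)" "s_gen = ev (gtree GS)"
    by (simp_all add: ev_gtree gen_val_def)
  then show ?case using gen_base by blast
next
  case (gen_comp C D i)
  then obtain t u where "C = ev t" "D = ev u" by blast
  with gen_comp.hyps(3,4) show ?case
    using ev_tcomp[of i t u] bsize_ev[of t] by (metis rangeI)
qed

lemma fcong_imp_ev_eq: "fcong t u \<Longrightarrow> ev t = ev u"
proof (induction rule: fcong.induct)
  case rel
  then show ?case by (simp add: ev_eq_tree_bnc tree_bnc_def gtree_def)
next
  case (comp t t' u u' i)
  then show ?case using ev_tcomp[of i t u] ev_tcomp[of i t' u'] bsize_ev by metis
qed auto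

section \<open>Normal forms\<close>

lemma fcong_Node: "fcong l l' \<Longrightarrow> fcong r r' \<Longrightarrow> fcong (Node g l r) (Node g l' r')"
  unfolding Node_eq_tcomp
  by (intro fcong.comp fcong.refl) (simp_all add: gtree_def)

lemma fcong_rotate: "fcong (Node GS (Node GP x y) z) (Node GP x (Node GS y z))"
proof -
  have rel: "fcong (Node GS (Node GP Leaf Leaf) Leaf) (Node GP Leaf (Node GS Leaf Leaf))"
    using fcong.rel by (simp add: gtree_def)
  have "fcong (Node GS (Node GP x Leaf) Leaf) (Node GP x (Node GS Leaf Leaf))"
    using fcong.comp[OF rel fcong.refl[of x], of 1] by simp
  from fcong.comp[OF this fcong.refl[of y], of "arity x + 1"]
  have "fcong (Node GS (Node GP x y) Leaf) (Node GP x (Node GS y Leaf))"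
    by simp
  from fcong.comp[OF this fcong.refl[of z], of "arity x + arity y + 1"]
  show ?thesis by simp
qed

text \<open>The normal form of Node GS a b, for normal a and b.\<close>

fun s_node :: "ftree \<Rightarrow> ftree \<Rightarrow> ftree" where
  "s_node (Node GP x y) z = Node GP x (s_node y z)"
| "s_node Leaf z = Node GS Leaf z"
| "s_node (Node GS x y) z = Node GS (Node GS x y) z"

fun normal_form :: "ftree \<Rightarrow> ftree" where
  "normal_form Leaf = Leaf"
| "normal_form (Node GP l r) = Node GP (normal_form l) (normal_form r)"
| "normal_form (Node GS l r) = s_node (normal_form l) (normal_form r)"

fun s_left_spine :: "ftree \<Rightarrow> bool" where
  "s_left_spine Leaf = True"
| "s_left_spine (Node GS l r) = s_left_spine l"
| "s_left_spine (Node GP l r) = False"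

fun normal :: "ftree \<Rightarrow> bool" where
  "normal Leaf = True"
| "normal (Node GP l r) = (normal l \<and> normal r)"
| "normal (Node GS l r) = (normal l \<and> normal r \<and> s_left_spine l)"

lemma fcong_s_node: "fcong (Node GS a b) (s_node a b)"
proof (induction a b rule: s_node.induct)
  case (1 x y z)
  then show ?case
    using fcong.trans[OF fcong_rotate fcong_Node[OF fcong.refl 1]] by simp
qed (auto intro: fcong.refl)

lemma fcong_normal_form: "fcong t (normal_form t)"
proof (induction t rule: normal_form.induct)
  case (3 l r)
  then show ?case
    using fcong_Node[OF 3] fcong_s_node[of "normal_form l" "normal_form r"]
    by (auto intro: fcong.trans)
qed (auto intro: fcong.refl fcong_Node)

lemma normal_s_node: "normal a \<Longrightarrow> normal b \<Longrightarrow> normal (s_node a b)"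
  by (induction a b rule: s_node.induct) auto

lemma normal_normal_form: "normal (normal_form t)"
  by (induction t rule: normal_form.induct) (auto simp: normal_s_node)

section \<open>Normal trees are determined by their arcs\<close>

lemma s_left_spine_no_arc_from_first_vertex: "s_left_spine t \<Longrightarrow> (v, w) \<notin> inner_arcs t v"
proof (induction t arbitrary: v w)
  case (Node g l r)
  then have "g = GS" "s_left_spine l" by (cases g; auto)+
  moreover have "(v, w) \<notin> tree_arcs r (v + arity l) True"
    using tree_arcs_bounds[of "(v, w)" r "v + arity l"] arity_ge_1[of l] by auto
  ultimately show ?case using Node.IH(1) by simp
qed simp

lemma normal_root_eq_if_inner_arcs_eq:
  assumes "normal (Node g l r)" "normal (Node g' l' r')"
    and "inner_arcs (Node g l r) v = inner_arcs (Node g' l' r') v"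
  shows "g = g'"
proof -
  have "(v, v + arity x) \<in> inner_arcs (Node GP x y) v" for x y
    using base_in_tree_arcs[of v x] by simp
  moreover have "s_left_spine (Node GS x y)" if "normal (Node GS x y)" for x y
    using that by simp
  ultimately show ?thesis
    using assms s_left_spine_no_arc_from_first_vertex by (cases g; cases g') metis+
qed

lemma left_arity_eq_if_inner_arcs_eq:
  assumes eq: "inner_arcs (Node g l r) v = inner_arcs (Node g l' r') v"
    and "arity l + arity r = arity l' + arity r'"
  shows "arity l = arity l'"
proof (cases g)
  case GP
  have le: "arity x \<le> arity x'"
    if "inner_arcs (Node GP x y) v = inner_arcs (Node GP x' y') v" for x y x' y'
  proof -
    have "(v, v + arity x) \<in> tree_arcs x' v True \<union> inner_arcs y' (v + arity x')"
      using that base_in_tree_arcs[of v x] by auto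
    then show ?thesis
      using tree_arcs_bounds[of "(v, v + arity x)" x' v] tree_arcs_bounds[of "(v, v + arity x)" y']
        arity_ge_1[of x'] by fastforce
  qed
  show ?thesis using le[of l r l' r'] le[of l' r' l r] eq GP by simp
next
  case GS
  have le: "arity x' \<le> arity x"
    if "inner_arcs (Node GS x y) v = inner_arcs (Node GS x' y') v"
      and "arity x + arity y = arity x' + arity y'" for x y x' y'
  proof -
    have "(v + arity x, v + arity x + arity y) \<in> inner_arcs x' v \<union> tree_arcs y' (v + arity x') True"
      using that(1) base_in_tree_arcs[of "v + arity x" y] by auto
    then show ?thesis
      using that(2) tree_arcs_bounds[of "(v + arity x, v + arity x + arity y)" x' v]
        tree_arcs_bounds[of "(v + arity x, v + arity x + arity y)" y'] arity_ge_1[of y']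
      by fastforce
  qed
  show ?thesis using le[of l r l' r'] le[of l' r' l r] eq assms(2) GS by simp
qed

lemma children_arcs_eq_if_inner_arcs_eq:
  assumes "inner_arcs (Node g l r) v = inner_arcs (Node g l' r') v" "arity l = arity l'"
  shows "tree_arcs l v (g = GP) = tree_arcs l' v (g = GP)"
    and "tree_arcs r (v + arity l) (g = GS) = tree_arcs r' (v + arity l) (g = GS)"
proof -
  have "(tree_arcs l v (g = GP) \<union> tree_arcs l' v (g = GP))
      \<inter> (tree_arcs r (v + arity l) (g = GS) \<union> tree_arcs r' (v + arity l) (g = GS)) = {}"
    using tree_arcs_bounds[of _ l v] tree_arcs_bounds[of _ l' v] tree_arcs_bounds[of _ r "v + arity l"]
      tree_arcs_bounds[of _ r' "v + arity l"] assms(2) by fastforce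
  moreover have "tree_arcs l v (g = GP) \<union> tree_arcs r (v + arity l) (g = GS)
      = tree_arcs l' v (g = GP) \<union> tree_arcs r' (v + arity l) (g = GS)"
    using assms by simp
  ultimately show "tree_arcs l v (g = GP) = tree_arcs l' v (g = GP)"
    and "tree_arcs r (v + arity l) (g = GS) = tree_arcs r' (v + arity l) (g = GS)"
    by blast+
qed

lemma normal_eq_if_inner_arcs_eq:
  "normal t \<Longrightarrow> normal u \<Longrightarrow> arity t = arity u \<Longrightarrow> inner_arcs t v = inner_arcs u v \<Longrightarrow> t = u"
proof (induction t arbitrary: u v)
  case Leaf
  show ?case
  proof (cases u)
    case (Node g l r)
    then show ?thesis using Leaf.prems(3) arity_ge_1[of l] arity_ge_1[of r] by simp
  qed simp
next
  case (Node g l r)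
  obtain g' l' r' where u: "u = Node g' l' r'"
    using Node.prems(3) arity_ge_1[of l] arity_ge_1[of r] by (cases u) auto
  have g: "g' = g"
    using normal_root_eq_if_inner_arcs_eq Node.prems u by metis
  have eq: "inner_arcs (Node g l r) v = inner_arcs (Node g l' r') v"
    using Node.prems(4) u g by simp
  have al: "arity l = arity l'" and ar: "arity r = arity r'"
    using left_arity_eq_if_inner_arcs_eq[OF eq] Node.prems(3) u by simp_all
  have "inner_arcs l v = inner_arcs l' v"
    using inner_arcs_eqI[OF al children_arcs_eq_if_inner_arcs_eq(1)[OF eq al]] .
  moreover have "inner_arcs r (v + arity l) = inner_arcs r' (v + arity l)"
    using inner_arcs_eqI[OF ar children_arcs_eq_if_inner_arcs_eq(2)[OF eq al]] .
  moreover have "normal l" "normal r" "normal l'" "normal r'"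
    using Node.prems(1,2) u g by (cases g; simp)+
  ultimately show ?case using Node.IH al ar u g by metis
qed

theorem theorem3p21:
  shows "range ev = gen_subop {p_gen, s_gen} \<and> (\<forall>t u. ev t = ev u \<longleftrightarrow> fcong t u)"
proof (intro conjI allI iffI)
  show "range ev = gen_subop {p_gen, s_gen}"
    using ev_in_gen_subop gen_subop_subset_range_ev by blast
next
  fix t u
  assume "ev t = ev u"
  then have "tree_bnc (normal_form t) = tree_bnc (normal_form u)"
    using fcong_imp_ev_eq fcong_normal_form by (metis ev_eq_tree_bnc)
  then have "arity (normal_form t) = arity (normal_form u)"
    and "tree_arcs (normal_form t) 1 True = tree_arcs (normal_form u) 1 True"
    by (simp_all add: tree_bnc_def)
  then have "normal_form t = normal_form u"
    using normal_eq_if_inner_arcs_eq normal_normal_form inner_arcs_eqI by blast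
  then show "fcong t u"
    using fcong_normal_form by (metis fcong.sym fcong.trans)
next
  fix t u
  assume "fcong t u"
  then show "ev t = ev u" by (rule fcong_imp_ev_eq)
qed

end
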